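(* Let $G=(V,E)$ be a finite connected simple undirected graph with root $e\in V$, and let $k\ge1$ be such that the distance $k$-graph $G^{[k]}$ is non-trivial. Let $N\ge1$ and let $(G^{\star N})^{[k]}$ be the distance $k$-graph of the $N$-fold star power $G^{\star N}$. Then there is a graph $\hat G$ on the vertex set of $G^{\star N}$ such that $$(G^{\star N})^{[k]}=(G^{[k]})^{\star N}\cup\hat G,$$ i.e. the edge set of $(G^{\star N})^{[k]}$ is the union of the edge set of $(G^{[k]})^{\star N}$ (the $N$-fold star power of the rooted graph $(G^{[k]},e)$) and the edge set of $\hat G$, and every vertex $z$ of $\hat G$ (incident to one of its edges) satisfies $\partial_{G^{\star N}}(z,e)<k$.
   Context: All graphs are simple and undirected; $\partial_H$ denotes graph distance in $H$. For a graph $H=(W,F)$ and $k\ge1$, the distance $k$-graph $H^{[k]}$ is the graph on $W$ with edges the pairs $(x,y)$ with $\partial_H(x,y)=k$. For rooted graphs $(G_1,o_1)$, $(G_2,o_2)$ the star product $G_1\star G_2$ has vertex set $V_1\times V_2$, with $(v_1,w_1)\sim(v_2,w_2)$ iff either $v_1=v_2=o_1$ and $w_1\sim w_2$, or $v_1\sim v_2$ and $w_1=w_2=o_2$; it is rooted at $(o_1,o_2)$. The $N$-fold star power $G^{\star N}$ is (on the component of the root) the graph obtained from $N$ disjoint copies of $G$ by identifying their roots into one vertex $e$; $(G^{[k]})^{\star N}$ is formed in the same way from $N$ copies of $G^{[k]}$ rooted at $e$, on the same vertex set. *)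

theory Defs
  imports Main
begin

definition edge_rel :: "'a set \<Rightarrow> ('a \<Rightarrow> 'a \<Rightarrow> bool) \<Rightarrow> ('a \<times> 'a) set" where
  "edge_rel W F = {(a, b). a \<in> W \<and> b \<in> W \<and> F a b}"

definition simple_graph :: "'a set \<Rightarrow> ('a \<Rightarrow> 'a \<Rightarrow> bool) \<Rightarrow> bool" where
  "simple_graph W F \<longleftrightarrow> (\<forall>x y. F x y \<longrightarrow> x \<in> W \<and> y \<in> W) \<and>
     (\<forall>x y. F x y \<longrightarrow> F y x) \<and> (\<forall>x. \<not> F x x)"

definition connected_graph :: "'a set \<Rightarrow> ('a \<Rightarrow> 'a \<Rightarrow> bool) \<Rightarrow> bool" where
  "connected_graph W F \<longleftrightarrow> (\<forall>x\<in>W. \<forall>y\<in>W. \<exists>n. (x, y) \<in> (edge_rel W F) ^^ n)"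

text \<open>Graph distance: length of a shortest walk (meaningful for connected graphs).\<close>
definition gdist :: "'a set \<Rightarrow> ('a \<Rightarrow> 'a \<Rightarrow> bool) \<Rightarrow> 'a \<Rightarrow> 'a \<Rightarrow> nat" where
  "gdist W F x y = (LEAST n. (x, y) \<in> (edge_rel W F) ^^ n)"

definition distk :: "'a set \<Rightarrow> ('a \<Rightarrow> 'a \<Rightarrow> bool) \<Rightarrow> nat \<Rightarrow> 'a \<Rightarrow> 'a \<Rightarrow> bool" where
  "distk W F k x y \<longleftrightarrow> x \<in> W \<and> y \<in> W \<and> gdist W F x y = k"

text \<open>N-fold star power: N copies of (W,F) indexed by i < N, with the roots e
 identified into the single vertex (0,e).\<close>
definition star_emb :: "'a \<Rightarrow> nat \<Rightarrow> 'a \<Rightarrow> nat \<times> 'a" where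
  "star_emb e i v = (if v = e then (0, e) else (i, v))"

definition star_verts :: "'a set \<Rightarrow> 'a \<Rightarrow> nat \<Rightarrow> (nat \<times> 'a) set" where
  "star_verts W e N = {star_emb e i v | i v. i < N \<and> v \<in> W}"

definition star_edges :: "'a set \<Rightarrow> ('a \<Rightarrow> 'a \<Rightarrow> bool) \<Rightarrow> 'a \<Rightarrow> nat \<Rightarrow>
    nat \<times> 'a \<Rightarrow> nat \<times> 'a \<Rightarrow> bool" where
  "star_edges W F e N x y \<longleftrightarrow> (\<exists>i<N. \<exists>u v. u \<in> W \<and> v \<in> W \<and> F u v \<and>
      x = star_emb e i u \<and> y = star_emb e i v)"

end

theory Submission
  imports Defs
begin

text \<open>Projecting the star power onto one copy of \<open>G\<close> (sending all other copies to the
 root \<open>e\<close>) maps edges to edges or to single vertices, so it does not increase distances,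
 while the embedding of that copy preserves them. Hence every copy sits isometrically in the
 star power, and the star power of the distance-\<open>k\<close> graph is contained in the distance-\<open>k\<close>
 graph of the star power. The remaining distance-\<open>k\<close> pairs join two non-root vertices of
 different copies. A shortest walk between them enters the last copy only in its final step,
 so its first \<open>k - 1\<close> steps project to a walk from the first endpoint to the root: that
 endpoint lies at distance \<open>< k\<close> from the root.\<close>

lemma relpow_image:
  assumes "\<And>a b. (a, b) \<in> R \<Longrightarrow> (f a, f b) \<in> S"
    and "(x, y) \<in> R ^^ n"
  shows "(f x, f y) \<in> S ^^ n"
  using assms(2)
proof (induction n arbitrary: y)
  case (Suc n)
  then obtain z where "(x, z) \<in> R ^^ n" "(z, y) \<in> R" by (meson relpow_Suc_E)
  with Suc.IH assms(1) show ?case by (meson relpow_Suc_I)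
qed simp

lemma relpow_image_reflcl:
  assumes "\<And>a b. (a, b) \<in> R \<Longrightarrow> f a = f b \<or> (f a, f b) \<in> S"
    and "(x, y) \<in> R ^^ n"
  shows "\<exists>m\<le>n. (f x, f y) \<in> S ^^ m"
  using assms(2)
proof (induction n arbitrary: y)
  case (Suc n)
  then obtain z where "(x, z) \<in> R ^^ n" "(z, y) \<in> R" by (meson relpow_Suc_E)
  with Suc.IH obtain m where m: "m \<le> n" "(f x, f z) \<in> S ^^ m" by blast
  from assms(1)[OF \<open>(z, y) \<in> R\<close>] show ?case
  proof
    assume "f z = f y"
    with m show ?thesis by (metis le_SucI)
  next
    assume "(f z, f y) \<in> S"
    with m show ?thesis by (meson Suc_le_mono relpow_Suc_I)
  qed
qed simp

lemma relpow_sym: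
  assumes "\<And>a b. (a, b) \<in> R \<Longrightarrow> (b, a) \<in> R"
    and "(x, y) \<in> R ^^ n"
  shows "(y, x) \<in> R ^^ n"
  using assms(2)
proof (induction n arbitrary: y)
  case (Suc n)
  then obtain z where "(x, z) \<in> R ^^ n" "(z, y) \<in> R" by (meson relpow_Suc_E)
  with Suc.IH assms(1) show ?case by (meson relpow_Suc_I2)
qed simp

lemma gdist_le: "(x, y) \<in> edge_rel W F ^^ n \<Longrightarrow> gdist W F x y \<le> n"
  unfolding gdist_def by (rule Least_le)

lemma gdist_walk: "(x, y) \<in> edge_rel W F ^^ n \<Longrightarrow> (x, y) \<in> edge_rel W F ^^ gdist W F x y"
  unfolding gdist_def by (rule LeastI)

lemma gdist_self [simp]: "gdist W F x x = 0"
  unfolding gdist_def by (rule Least_eq_0) simp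

lemma gdist_sym:
  assumes "\<And>a b. F a b \<Longrightarrow> F b a"
  shows "gdist W F x y = gdist W F y x"
proof -
  have sym: "\<And>a b. (a, b) \<in> edge_rel W F \<Longrightarrow> (b, a) \<in> edge_rel W F"
    using assms unfolding edge_rel_def by auto
  then have "\<And>n. (x, y) \<in> edge_rel W F ^^ n \<longleftrightarrow> (y, x) \<in> edge_rel W F ^^ n"
    using relpow_sym[OF sym] by blast
  then show ?thesis unfolding gdist_def by simp
qed

lemma simple_graph_distk:
  assumes "simple_graph W F" and "k \<ge> 1"
  shows "simple_graph W (distk W F k)"
  using assms gdist_sym[of F W] unfolding simple_graph_def distk_def by auto

lemma simple_graph_diff:
  assumes "simple_graph W F" and "\<And>x y. F' x y \<Longrightarrow> F' y x"
  shows "simple_graph W (\<lambda>x y. F x y \<and> \<not> F' x y)"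
  using assms unfolding simple_graph_def by blast

lemma star_emb_root: "star_emb e i e = star_emb e 0 e"
  by (simp add: star_emb_def)

lemma star_emb_inj: "star_emb e i u = star_emb e i v \<Longrightarrow> u = v"
  by (auto simp: star_emb_def split: if_splits)

lemma star_emb_in_verts: "i < N \<Longrightarrow> v \<in> W \<Longrightarrow> star_emb e i v \<in> star_verts W e N"
  unfolding star_verts_def by blast

lemma simple_graph_star_edges:
  assumes "simple_graph W F"
  shows "simple_graph (star_verts W e N) (star_edges W F e N)"
proof -
  have "u \<noteq> v" if "F u v" for u v
    using assms that unfolding simple_graph_def by blast
  then have "\<not> star_edges W F e N x x" for x
    unfolding star_edges_def using star_emb_inj by metis
  moreover have "star_edges W F e N y x" if "star_edges W F e N x y" for x y
    using assms that unfolding simple_graph_def star_edges_def by blast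
  ultimately show ?thesis
    unfolding simple_graph_def star_edges_def by (blast intro: star_emb_in_verts)
qed

definition star_proj :: "'a \<Rightarrow> nat \<Rightarrow> nat \<times> 'a \<Rightarrow> 'a" where
  "star_proj e i x = (if fst x = i then snd x else e)"

lemma star_proj_emb_same [simp]: "star_proj e i (star_emb e i v) = v"
  by (simp add: star_proj_def star_emb_def)

lemma star_proj_emb_other: "j \<noteq> i \<Longrightarrow> star_proj e i (star_emb e j v) = e"
  by (simp add: star_proj_def star_emb_def)

lemma star_emb_edge:
  assumes "i < N" and "(u, v) \<in> edge_rel W F"
  shows "(star_emb e i u, star_emb e i v) \<in> edge_rel (star_verts W e N) (star_edges W F e N)"
  using assms unfolding edge_rel_def star_edges_def by (auto intro: star_emb_in_verts)

lemma star_proj_edge: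
  assumes "(x, y) \<in> edge_rel (star_verts W e N) (star_edges W F e N)"
  shows "star_proj e i x = star_proj e i y \<or> (star_proj e i x, star_proj e i y) \<in> edge_rel W F"
proof -
  from assms obtain j u v where "u \<in> W" "v \<in> W" "F u v"
    and x: "x = star_emb e j u" and y: "y = star_emb e j v"
    unfolding edge_rel_def star_edges_def by auto
  show ?thesis
  proof (cases "j = i")
    case True
    with x y \<open>u \<in> W\<close> \<open>v \<in> W\<close> \<open>F u v\<close> show ?thesis
      by (simp add: edge_rel_def)
  next
    case False
    with x y show ?thesis
      by (simp add: star_proj_emb_other)
  qed
qed

lemma star_emb_walk:
  assumes "i < N" and "(u, v) \<in> edge_rel W F ^^ n"
  shows "(star_emb e i u, star_emb e i v) \<in> edge_rel (star_verts W e N) (star_edges W F e N) ^^ n"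
  using relpow_image[OF star_emb_edge[OF assms(1)] assms(2)] .

lemma star_proj_walk:
  assumes "(x, y) \<in> edge_rel (star_verts W e N) (star_edges W F e N) ^^ n"
  shows "\<exists>m\<le>n. (star_proj e i x, star_proj e i y) \<in> edge_rel W F ^^ m"
  using relpow_image_reflcl[OF star_proj_edge assms] .

lemma gdist_star_emb:
  assumes "connected_graph W F" and "i < N" and "u \<in> W" and "v \<in> W"
  shows "gdist (star_verts W e N) (star_edges W F e N) (star_emb e i u) (star_emb e i v)
    = gdist W F u v"
    (is "?d = _")
proof (rule antisym)
  from assms obtain n where "(u, v) \<in> edge_rel W F ^^ n"
    unfolding connected_graph_def by blast
  then have walk: "(star_emb e i u, star_emb e i v)
      \<in> edge_rel (star_verts W e N) (star_edges W F e N) ^^ gdist W F u v"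
    by (rule star_emb_walk[OF assms(2) gdist_walk])
  then show "?d \<le> gdist W F u v"
    by (rule gdist_le)
  from star_proj_walk[OF gdist_walk[OF walk], of i] obtain m
    where "m \<le> ?d" "(u, v) \<in> edge_rel W F ^^ m"
    by auto
  then show "gdist W F u v \<le> ?d"
    by (meson gdist_le order_trans)
qed

lemma connected_graph_star:
  assumes "connected_graph W F" and "e \<in> W"
  shows "connected_graph (star_verts W e N) (star_edges W F e N)"
  unfolding connected_graph_def
proof (intro ballI)
  fix x y
  assume "x \<in> star_verts W e N" "y \<in> star_verts W e N"
  then obtain i u j v where "i < N" "u \<in> W" "x = star_emb e i u"
    and "j < N" "v \<in> W" "y = star_emb e j v"
    unfolding star_verts_def by blast
  moreover obtain a b where "(u, e) \<in> edge_rel W F ^^ a" "(e, v) \<in> edge_rel W F ^^ b"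
    using assms \<open>u \<in> W\<close> \<open>v \<in> W\<close> unfolding connected_graph_def by blast
  ultimately have "(x, star_emb e 0 e) \<in> edge_rel (star_verts W e N) (star_edges W F e N) ^^ a"
    and "(star_emb e 0 e, y) \<in> edge_rel (star_verts W e N) (star_edges W F e N) ^^ b"
    using star_emb_walk star_emb_root by metis+
  then show "\<exists>n. (x, y) \<in> edge_rel (star_verts W e N) (star_edges W F e N) ^^ n"
    by (meson relpow_trans)
qed

lemma star_walk_across_copies:
  assumes "(star_emb e i u, star_emb e j v) \<in> edge_rel (star_verts W e N) (star_edges W F e N) ^^ n"
    and "i \<noteq> j" and "v \<noteq> e"
  shows "\<exists>m<n. (u, e) \<in> edge_rel W F ^^ m"
proof -
  have "star_emb e i u \<noteq> star_emb e j v"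
    using assms(2,3) by (auto simp: star_emb_def)
  with assms(1) have "n \<noteq> 0"
    by (metis relpow_0_E)
  then obtain n' where n: "n = Suc n'"
    using not0_implies_Suc by blast
  with assms(1) obtain y
    where walk: "(star_emb e i u, y) \<in> edge_rel (star_verts W e N) (star_edges W F e N) ^^ n'"
    and last_edge: "(y, star_emb e j v) \<in> edge_rel (star_verts W e N) (star_edges W F e N)"
    by (meson relpow_Suc_E)
  from last_edge obtain j' c d where "y = star_emb e j' c" "star_emb e j v = star_emb e j' d"
    unfolding edge_rel_def star_edges_def by auto
  with \<open>v \<noteq> e\<close> have "y = star_emb e j c"
    by (auto simp: star_emb_def split: if_splits)
  with \<open>i \<noteq> j\<close> have "star_proj e i y = e"
    by (simp add: star_proj_emb_other)
  with star_proj_walk[OF walk, of i] n show ?thesis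
    by (metis le_imp_less_Suc star_proj_emb_same)
qed

lemma distk_star_emb:
  assumes "connected_graph W F" and "i < N" and "u \<in> W" and "v \<in> W"
  shows "distk (star_verts W e N) (star_edges W F e N) k (star_emb e i u) (star_emb e i v)
    \<longleftrightarrow> distk W F k u v"
  using assms by (simp add: distk_def gdist_star_emb star_emb_in_verts)

lemma star_edges_distk_imp_distk:
  assumes "connected_graph W F" and "star_edges W (distk W F k) e N x y"
  shows "distk (star_verts W e N) (star_edges W F e N) k x y"
proof -
  from assms(2) obtain i u v where "i < N" "u \<in> W" "v \<in> W" "distk W F k u v"
    and "x = star_emb e i u" "y = star_emb e i v"
    unfolding star_edges_def by blast
  then show ?thesis
    using distk_star_emb[OF assms(1)] by simp
qed

lemma star_distk_off_copies_near_root: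
  assumes "connected_graph W F" and "e \<in> W"
    and dist: "distk (star_verts W e N) (star_edges W F e N) k x y"
    and off: "\<not> star_edges W (distk W F k) e N x y"
  shows "gdist (star_verts W e N) (star_edges W F e N) x (star_emb e 0 e) < k"
proof -
  from dist obtain i u j v where "i < N" "u \<in> W" and x: "x = star_emb e i u"
    and "j < N" "v \<in> W" and y: "y = star_emb e j v"
    unfolding distk_def star_verts_def by blast
  have cross: "i \<noteq> j \<and> v \<noteq> e"
  proof (rule ccontr)
    assume "\<not> (i \<noteq> j \<and> v \<noteq> e)"
    then have "y = star_emb e i v"
      using y by (auto simp: star_emb_def)
    then have "distk W F k u v"
      using dist x distk_star_emb[OF assms(1) \<open>i < N\<close> \<open>u \<in> W\<close> \<open>v \<in> W\<close>] by simp
    with \<open>i < N\<close> \<open>u \<in> W\<close> \<open>v \<in> W\<close> x \<open>y = star_emb e i v\<close>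
    have "star_edges W (distk W F k) e N x y"
      unfolding star_edges_def by blast
    with off show False ..
  qed
  have walk:
    "(star_emb e i u, star_emb e j v) \<in> edge_rel (star_verts W e N) (star_edges W F e N) ^^ k"
  proof -
    from connected_graph_star[OF assms(1,2)] dist obtain n
      where "(x, y) \<in> edge_rel (star_verts W e N) (star_edges W F e N) ^^ n"
      unfolding connected_graph_def distk_def by blast
    from gdist_walk[OF this] dist show ?thesis
      unfolding distk_def x y by simp
  qed
  obtain m where "m < k" "(u, e) \<in> edge_rel W F ^^ m"
    using star_walk_across_copies[OF walk] cross by blast
  then have "gdist W F u e < k"
    by (meson gdist_le le_less_trans)
  then show ?thesis
    using gdist_star_emb[OF assms(1) \<open>i < N\<close> \<open>u \<in> W\<close> assms(2), of e]
    using x star_emb_root[of e i] by simp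
qed

theorem lemma4p1:
  fixes V :: "'a set" and E :: "'a \<Rightarrow> 'a \<Rightarrow> bool" and e :: 'a and k N :: nat
  assumes "finite V" and "simple_graph V E" and "connected_graph V E" and "e \<in> V"
    and "k \<ge> 1" and "\<exists>x y. distk V E k x y"
    and "N \<ge> 1"
  shows "\<exists>H :: nat \<times> 'a \<Rightarrow> nat \<times> 'a \<Rightarrow> bool.
     simple_graph (star_verts V e N) H \<and>
     (\<forall>x y. distk (star_verts V e N) (star_edges V E e N) k x y \<longleftrightarrow>
        star_edges V (distk V E k) e N x y \<or> H x y) \<and>
     (\<forall>z. (\<exists>w. H z w) \<longrightarrow>
        gdist (star_verts V e N) (star_edges V E e N) z (star_emb e 0 e) < k)"
proof -
  let ?D = "distk (star_verts V e N) (star_edges V E e N) k"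
  let ?P = "star_edges V (distk V E k) e N"
  define H where "H = (\<lambda>x y. ?D x y \<and> \<not> ?P x y)"
  have "simple_graph (star_verts V e N) ?P"
    using simple_graph_star_edges[OF simple_graph_distk[OF assms(2,5)]] .
  then have "?P y x" if "?P x y" for x y
    using that unfolding simple_graph_def by blast
  then have "simple_graph (star_verts V e N) H"
    unfolding H_def
    by (rule simple_graph_diff[OF simple_graph_distk[OF simple_graph_star_edges[OF assms(2)] assms(5)]])
  moreover have "?D x y \<longleftrightarrow> ?P x y \<or> H x y" for x y
    unfolding H_def using star_edges_distk_imp_distk[OF assms(3)] by blast
  moreover have "gdist (star_verts V e N) (star_edges V E e N) z (star_emb e 0 e) < k"
    if "H z w" for z w
    using star_distk_off_copies_near_root[OF assms(3,4)] that unfolding H_def by blast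
  ultimately show ?thesis
    by blast
qed

end
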